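(* Let $A$ be a semiprime associative algebra and $Q$ any subalgebra of $Q^l_{\max}(A)$ containing $A$. Then $A\subseteq Q$ is a dense extension.
   Context: Algebras over a commutative unital ring $\Phi$; $Q^l_{\max}(A)$ is the maximal left (Utumi) quotient algebra of $A$. For an algebra $Q$, $M(Q)$ is the subalgebra of $\mathrm{End}_\Phi(Q)$ generated by the identity and the left and right multiplication operators $\lambda_q(x)=qx$, $\rho_q(x)=xq$, $q\in Q$. An extension $A\subseteq Q$ is dense if the only $\mu\in M(Q)$ with $\mu(A)=0$ is $\mu=0$. *)

theory Defs
  imports Main
begin

text \<open>The ambient algebra
  (playing the role of Q^l_max(A)) is a type 'q of class ring (HOL's ring is
  associative, not necessarily unital), with a scalar multiplication s making it
  a \<Phi>-algebra.\<close>

definition phi_algebra :: "('k::comm_ring_1 \<Rightarrow> 'q::ring \<Rightarrow> 'q) \<Rightarrow> bool" where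
  "phi_algebra s \<longleftrightarrow>
     (\<forall>r x y. s r (x + y) = s r x + s r y) \<and> (\<forall>r t x. s (r + t) x = s r x + s t x) \<and>
     (\<forall>r t x. s r (s t x) = s (r * t) x) \<and> (\<forall>x. s 1 x = x) \<and>
     (\<forall>r x y. s r (x * y) = s r x * y \<and> s r (x * y) = x * s r y)"

definition subalgebra :: "('k::comm_ring_1 \<Rightarrow> 'q::ring \<Rightarrow> 'q) \<Rightarrow> 'q set \<Rightarrow> bool" where
  "subalgebra s B \<longleftrightarrow> 0 \<in> B \<and> (\<forall>x\<in>B. \<forall>y\<in>B. x + y \<in> B \<and> x * y \<in> B)
     \<and> (\<forall>r. \<forall>x\<in>B. s r x \<in> B)"

definition alg_ideal :: "('k::comm_ring_1 \<Rightarrow> 'q::ring \<Rightarrow> 'q) \<Rightarrow> 'q set \<Rightarrow> 'q set \<Rightarrow> bool" where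
  "alg_ideal s A I \<longleftrightarrow> I \<subseteq> A \<and> 0 \<in> I \<and> (\<forall>x\<in>I. \<forall>y\<in>I. x + y \<in> I)
     \<and> (\<forall>r. \<forall>x\<in>I. s r x \<in> I) \<and> (\<forall>a\<in>A. \<forall>x\<in>I. a * x \<in> I \<and> x * a \<in> I)"

text \<open>Semiprime: no nonzero ideal I with I^2 = 0 (I^2 is spanned by the products xy, x,y in I).\<close>
definition semiprime :: "('k::comm_ring_1 \<Rightarrow> 'q::ring \<Rightarrow> 'q) \<Rightarrow> 'q set \<Rightarrow> bool" where
  "semiprime s A \<longleftrightarrow> (\<forall>I. alg_ideal s A I \<and> (\<forall>x\<in>I. \<forall>y\<in>I. x * y = 0) \<longrightarrow> I \<subseteq> {0})"

definition left_ideal :: "('k::comm_ring_1 \<Rightarrow> 'q::ring \<Rightarrow> 'q) \<Rightarrow> 'q set \<Rightarrow> 'q set \<Rightarrow> bool" where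
  "left_ideal s A I \<longleftrightarrow> I \<subseteq> A \<and> 0 \<in> I \<and> (\<forall>x\<in>I. \<forall>y\<in>I. x + y \<in> I)
     \<and> (\<forall>r. \<forall>x\<in>I. s r x \<in> I) \<and> (\<forall>a\<in>A. \<forall>x\<in>I. a * x \<in> I)"

definition dense_left_ideal :: "('k::comm_ring_1 \<Rightarrow> 'q::ring \<Rightarrow> 'q) \<Rightarrow> 'q set \<Rightarrow> 'q set \<Rightarrow> bool" where
  "dense_left_ideal s A I \<longleftrightarrow> left_ideal s A I \<and>
     (\<forall>p\<in>A. \<forall>q\<in>A. p \<noteq> 0 \<longrightarrow> (\<exists>a\<in>A. a * p \<noteq> 0 \<and> a * q \<in> I))"

definition left_module_hom :: "('k::comm_ring_1 \<Rightarrow> 'q::ring \<Rightarrow> 'q) \<Rightarrow> 'q set \<Rightarrow> 'q set \<Rightarrow> ('q \<Rightarrow> 'q) \<Rightarrow> bool" where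
  "left_module_hom s A I f \<longleftrightarrow> (\<forall>x\<in>I. f x \<in> A) \<and> (\<forall>x\<in>I. \<forall>y\<in>I. f (x + y) = f x + f y)
     \<and> (\<forall>r. \<forall>x\<in>I. f (s r x) = s r (f x)) \<and> (\<forall>a\<in>A. \<forall>x\<in>I. f (a * x) = a * f x)"

text \<open>The whole ambient algebra (UNIV) is a maximal left (Utumi) quotient algebra of the
  subalgebra A, via the standard characterisation: (i) it is a left quotient algebra of A
  (for p, q with p \<noteq> 0 there is a in A with ap \<noteq> 0 and aq in A), and (ii) every left
  A-module homomorphism from a dense left ideal of A into A is right multiplication by
  some element.\<close>
definition is_max_left_quotient :: "('k::comm_ring_1 \<Rightarrow> 'q::ring \<Rightarrow> 'q) \<Rightarrow> 'q set \<Rightarrow> bool" where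
  "is_max_left_quotient s A \<longleftrightarrow> subalgebra s A \<and>
     (\<forall>p q. p \<noteq> 0 \<longrightarrow> (\<exists>a\<in>A. a * p \<noteq> 0 \<and> a * q \<in> A)) \<and>
     (\<forall>I f. dense_left_ideal s A I \<and> left_module_hom s A I f \<longrightarrow> (\<exists>q. \<forall>x\<in>I. f x = x * q))"

text \<open>M(Q): the subalgebra of End(Q) generated by the identity and the left and right
  multiplication operators by elements of Q (operators are compared on Q).\<close>
inductive_set mult_algebra :: "('k::comm_ring_1 \<Rightarrow> 'q::ring \<Rightarrow> 'q) \<Rightarrow> 'q set \<Rightarrow> ('q \<Rightarrow> 'q) set"
  for s :: "'k::comm_ring_1 \<Rightarrow> 'q::ring \<Rightarrow> 'q" and Q :: "'q set" where
  ma_id: "id \<in> mult_algebra s Q"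
| ma_left: "q \<in> Q \<Longrightarrow> (\<lambda>x. q * x) \<in> mult_algebra s Q"
| ma_right: "q \<in> Q \<Longrightarrow> (\<lambda>x. x * q) \<in> mult_algebra s Q"
| ma_zero: "(\<lambda>x. 0) \<in> mult_algebra s Q"
| ma_add: "f \<in> mult_algebra s Q \<Longrightarrow> g \<in> mult_algebra s Q \<Longrightarrow> (\<lambda>x. f x + g x) \<in> mult_algebra s Q"
| ma_scale: "f \<in> mult_algebra s Q \<Longrightarrow> (\<lambda>x. s r (f x)) \<in> mult_algebra s Q"
| ma_comp: "f \<in> mult_algebra s Q \<Longrightarrow> g \<in> mult_algebra s Q \<Longrightarrow> f \<circ> g \<in> mult_algebra s Q"

definition dense_extension :: "('k::comm_ring_1 \<Rightarrow> 'q::ring \<Rightarrow> 'q) \<Rightarrow> 'q set \<Rightarrow> 'q set \<Rightarrow> bool" where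
  "dense_extension s A Q \<longleftrightarrow> A \<subseteq> Q \<and>
     (\<forall>\<mu>\<in>mult_algebra s Q. (\<forall>a\<in>A. \<mu> a = 0) \<longrightarrow> (\<forall>x\<in>Q. \<mu> x = 0))"

end

theory Submission
  imports Defs
begin

(* Q_max(A) is unital, so every operator in M(Q) is an elementary operator x \<mapsto> \<Sum> c_i x d_i.
   If such an operator vanishes on A but not at x, a common left denominator t \<in> A of the c_i with
   t \<mu>(x) \<noteq> 0 reduces the claim to left coefficients a_i in A.  For those, induct on the number
   of terms: the coefficients a_j w a_i - a_i w a_j (w \<in> A) kill the j-th term, so the induction
   hypothesis gives a_j w z = 0 for z = \<Sum> a_i p b_i whenever w a_j p \<in> A.  This forces z A a_j = 0
   for all j, hence z A z = 0, and semiprimeness, which passes from A to its left quotient ring,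
   gives z = 0. *)

definition elementary_operator :: "('a::ring \<times> 'a) list \<Rightarrow> 'a \<Rightarrow> 'a" where
  "elementary_operator L x = (\<Sum>(c, d)\<leftarrow>L. c * x * d)"

lemma elementary_operator_Nil [simp]: "elementary_operator [] x = 0"
  by (simp add: elementary_operator_def)

lemma elementary_operator_Cons [simp]:
  "elementary_operator ((c, d) # L) x = c * x * d + elementary_operator L x"
  by (simp add: elementary_operator_def)

lemma elementary_operator_append [simp]:
  "elementary_operator (L @ M) x = elementary_operator L x + elementary_operator M x"
  by (simp add: elementary_operator_def)

lemma elementary_operator_mult:
  "a * elementary_operator L x * b = elementary_operator (map (\<lambda>(c, d). (a * c, d * b)) L) x"
  by (induction L) (auto simp: algebra_simps)

lemma elementary_operator_mult_left:
  "a * elementary_operator L x = elementary_operator (map (\<lambda>(c, d). (a * c, d)) L) x"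
  by (induction L) (auto simp: algebra_simps)

lemma elementary_operator_comp:
  "elementary_operator L (elementary_operator M x) =
     elementary_operator (concat (map (\<lambda>(a, b). map (\<lambda>(c, d). (a * c, d * b)) M) L)) x"
  by (induction L) (auto simp: elementary_operator_mult)

lemma elementary_operator_eq_zeroI:
  "fst ` set L \<subseteq> {0} \<Longrightarrow> elementary_operator L x = 0"
  by (induction L) auto

lemma elementary_operator_commutator:
  "elementary_operator (map (\<lambda>(c, d). (a * w * c - c * w * a, d)) L) y =
     a * w * elementary_operator L y - elementary_operator L (w * a * y)"
  by (induction L) (auto simp: algebra_simps)

lemma elementary_operator_commutator_remove1:
  assumes "(a, b) \<in> set L"
  shows "elementary_operator (map (\<lambda>(c, d). (a * w * c - c * w * a, d)) (remove1 (a, b) L)) y =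
     a * w * elementary_operator L y - elementary_operator L (w * a * y)"
proof -
  have "elementary_operator L x = a * x * b + elementary_operator (remove1 (a, b) L) x" for x
    using sum_list_map_remove1[OF assms, of "\<lambda>(c, d). c * x * d"]
    unfolding elementary_operator_def by simp
  then show ?thesis unfolding elementary_operator_commutator by (simp add: algebra_simps)
qed

locale phi_algebra_structure =
  fixes s :: "'k::comm_ring_1 \<Rightarrow> 'q::ring \<Rightarrow> 'q"
  assumes phi_algebra: "phi_algebra s"
begin

lemma scale_add_right: "s r (x + y) = s r x + s r y"
  using phi_algebra unfolding phi_algebra_def by blast

lemma scale_add_left: "s (r + t) x = s r x + s t x"
  using phi_algebra unfolding phi_algebra_def by blast

lemma scale_one: "s 1 x = x"
  using phi_algebra unfolding phi_algebra_def by blast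

lemma scale_mult_left: "s r (x * y) = s r x * y"
  using phi_algebra unfolding phi_algebra_def by blast

lemma scale_mult_right: "s r (x * y) = x * s r y"
  using phi_algebra unfolding phi_algebra_def by blast

lemma scale_zero_right: "s r 0 = 0"
  using scale_add_right[of r 0 0] by simp

lemma scale_zero_left: "s 0 x = 0"
  using scale_add_left[of 0 0 x] by simp

lemma scale_minus_one: "s (-1) x = - x"
  using scale_add_left[of "-1" 1 x] by (simp add: scale_zero_left scale_one eq_neg_iff_add_eq_0)

lemma scale_elementary_operator:
  "s r (elementary_operator L x) = elementary_operator (map (\<lambda>(c, d). (s r c, d)) L) x"
  by (induction L) (auto simp: scale_add_right scale_zero_right scale_mult_left)

lemma mult_algebra_elementary_operator:
  fixes e :: 'q
  assumes unit: "\<And>x. e * x = x" "\<And>x. x * e = x"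
    and \<mu>: "\<mu> \<in> mult_algebra s Q"
  shows "\<exists>L. \<mu> = elementary_operator L"
  using \<mu>
proof (induction rule: mult_algebra.induct)
  case ma_id
  have "id = elementary_operator [(e, e)]" by (auto simp: unit)
  then show ?case ..
next
  case (ma_left q)
  have "(\<lambda>x. q * x) = elementary_operator [(q, e)]" by (auto simp: unit)
  then show ?case ..
next
  case (ma_right q)
  have "(\<lambda>x. x * q) = elementary_operator [(e, q)]" by (auto simp: unit)
  then show ?case ..
next
  case ma_zero
  have "(\<lambda>x. 0) = elementary_operator []" by auto
  then show ?case ..
next
  case (ma_add f g)
  then obtain L M where "f = elementary_operator L" "g = elementary_operator M" by blast
  then have "(\<lambda>x. f x + g x) = elementary_operator (L @ M)" by auto
  then show ?case ..
next
  case (ma_scale f r)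
  then obtain L where "f = elementary_operator L" by blast
  then have "(\<lambda>x. s r (f x)) = elementary_operator (map (\<lambda>(c, d). (s r c, d)) L)"
    by (auto simp: scale_elementary_operator)
  then show ?case ..
next
  case (ma_comp f g)
  then obtain L M where "f = elementary_operator L" "g = elementary_operator M" by blast
  then have "f \<circ> g =
      elementary_operator (concat (map (\<lambda>(a, b). map (\<lambda>(c, d). (a * c, d * b)) M) L))"
    by (auto simp: elementary_operator_comp)
  then show ?case ..
qed

end

locale semiprime_subalgebra = phi_algebra_structure +
  fixes A :: "'q::ring set"
  assumes subalgebra: "subalgebra s A"
    and semiprime: "semiprime s A"
begin

lemma zero_mem: "0 \<in> A"
  using subalgebra unfolding subalgebra_def by blast

lemma add_mem: "x \<in> A \<Longrightarrow> y \<in> A \<Longrightarrow> x + y \<in> A"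
  using subalgebra unfolding subalgebra_def by blast

lemma mult_mem: "x \<in> A \<Longrightarrow> y \<in> A \<Longrightarrow> x * y \<in> A"
  using subalgebra unfolding subalgebra_def by blast

lemma scale_mem: "x \<in> A \<Longrightarrow> s r x \<in> A"
  using subalgebra unfolding subalgebra_def by blast

lemma diff_mem: "x \<in> A \<Longrightarrow> y \<in> A \<Longrightarrow> x - y \<in> A"
  using add_mem[of x "s (-1) y"] scale_mem[of y "-1"] by (simp add: scale_minus_one)

lemma square_zero_ideal_trivial:
  "alg_ideal s A I \<Longrightarrow> (\<And>x y. x \<in> I \<Longrightarrow> y \<in> I \<Longrightarrow> x * y = 0) \<Longrightarrow> I \<subseteq> {0}"
  using semiprime unfolding semiprime_def by blast

lemma left_annihilator_eq_zero:
  assumes "x \<in> A" "\<And>k. k \<in> A \<Longrightarrow> x * k = 0"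
  shows "x = 0"
proof -
  let ?I = "{x\<in>A. \<forall>k\<in>A. x * k = 0}"
  have "alg_ideal s A ?I"
    unfolding alg_ideal_def
    by (auto simp: zero_mem add_mem mult_mem scale_mem distrib_right mult.assoc
        scale_mult_left[symmetric] scale_zero_right)
  then have "?I \<subseteq> {0}" by (rule square_zero_ideal_trivial) auto
  with assms show ?thesis by auto
qed

lemma right_annihilator_eq_zero:
  assumes "x \<in> A" "\<And>k. k \<in> A \<Longrightarrow> k * x = 0"
  shows "x = 0"
proof -
  let ?I = "{x\<in>A. \<forall>k\<in>A. k * x = 0}"
  have "alg_ideal s A ?I"
    unfolding alg_ideal_def
    by (auto simp: zero_mem add_mem mult_mem scale_mem distrib_left mult.assoc[symmetric]
        scale_mult_right[symmetric] scale_zero_right)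
  then have "?I \<subseteq> {0}" by (rule square_zero_ideal_trivial) auto
  with assms show ?thesis by auto
qed

lemma sandwich_vanishes_imp_zero:
  assumes "y \<in> A" "\<And>t. t \<in> A \<Longrightarrow> y * t * y = 0"
  shows "y = 0"
proof -
  let ?K = "{x\<in>A. \<forall>r\<in>A. y * r * x = 0}"
  let ?M = "{x\<in>?K. \<forall>k\<in>?K. x * k = 0}"
  have K_left: "a * k \<in> ?K" if "a \<in> A" "k \<in> ?K" for a k
  proof -
    have "y * r * (a * k) = y * (r * a) * k" for r by (simp add: mult.assoc)
    with that show ?thesis by (auto simp: mult_mem)
  qed
  have "alg_ideal s A ?M"
    unfolding alg_ideal_def
  proof (intro conjI ballI allI)
    fix a x assume a: "a \<in> A" and x: "x \<in> ?M"
    show "a * x \<in> ?M"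
      using x K_left[OF a] by (auto simp: mult.assoc)
    have "y * r * (x * a) = y * r * x * a" "x * a * k = x * (a * k)" for r k
      by (simp_all add: mult.assoc)
    then show "x * a \<in> ?M"
      using a x K_left[OF a] by (auto simp: mult_mem)
  qed (auto simp: zero_mem add_mem scale_mem distrib_left distrib_right
      scale_mult_left[symmetric] scale_mult_right[symmetric] scale_zero_right)
  then have M_trivial: "?M \<subseteq> {0}" by (rule square_zero_ideal_trivial) auto
  have "r * y * u = 0" if "r \<in> A" "u \<in> A" for r u
  proof -
    have "y * t * (r * y * u) = y * (t * r) * y * u" for t
      by (simp add: mult.assoc)
    moreover have "r * y * u * k = r * (y * u * k)" for k
      by (simp add: mult.assoc)
    ultimately have "r * y * u \<in> ?M"
      using assms that by (auto simp: mult_mem)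
    with M_trivial show ?thesis by auto
  qed
  then have "r * y = 0" if "r \<in> A" for r
    using that assms(1) by (auto intro: left_annihilator_eq_zero mult_mem)
  then show ?thesis
    by (rule right_annihilator_eq_zero[OF assms(1)])
qed

end

locale semiprime_left_quotient = semiprime_subalgebra +
  assumes left_quotient: "p \<noteq> 0 \<Longrightarrow> \<exists>a\<in>A. a * p \<noteq> 0 \<and> a * q \<in> A"
begin

lemma quotient_sandwich_vanishes_imp_zero:
  assumes "\<And>u. u \<in> A \<Longrightarrow> t * u * t = 0"
  shows "t = 0"
proof (rule ccontr)
  assume "t \<noteq> 0"
  then obtain a where a: "a \<in> A" "a * t \<noteq> 0" "a * t \<in> A"
    using left_quotient by blast
  have "a * t * u * (a * t) = a * (t * (u * a) * t)" for u
    by (simp add: mult.assoc)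
  then have "a * t = 0"
    using a assms by (auto intro: sandwich_vanishes_imp_zero simp: mult_mem)
  with a show False by simp
qed

lemma denominators_annihilate_imp_zero:
  assumes "\<And>w. w \<in> A \<Longrightarrow> w * c \<in> A \<Longrightarrow> w * x = 0"
  shows "x = 0"
  using assms left_quotient by blast

lemma annihilation_swap:
  assumes "\<And>w. w \<in> A \<Longrightarrow> w * c \<in> A \<Longrightarrow> a * w * z = 0" and "r \<in> A"
  shows "z * r * a = 0"
proof (rule denominators_annihilate_imp_zero)
  fix w assume w: "w \<in> A" "w * c \<in> A"
  show "w * (z * r * a) = 0"
  proof (rule quotient_sandwich_vanishes_imp_zero)
    fix u assume u: "u \<in> A"
    have "u * w * c = u * (w * c)"
      by (simp add: mult.assoc)
    then have "a * (u * w) * z = 0"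
      using assms(1) u w by (simp add: mult_mem)
    moreover have "w * (z * r * a) * u * (w * (z * r * a)) =
        w * z * r * (a * (u * w) * z) * (r * a)"
      by (simp add: mult.assoc)
    ultimately show "w * (z * r * a) * u * (w * (z * r * a)) = 0"
      by simp
  qed
qed

lemma common_denominator:
  assumes "finite C" "z \<noteq> 0"
  shows "\<exists>t\<in>A. t * z \<noteq> 0 \<and> (\<forall>c\<in>C. t * c \<in> A)"
  using assms(1)
proof (induction C rule: finite_induct)
  case empty
  show ?case using left_quotient[OF assms(2)] by blast
next
  case (insert c C)
  then obtain t where t: "t \<in> A" "t * z \<noteq> 0" "\<forall>c\<in>C. t * c \<in> A" by blast
  then obtain t' where t': "t' \<in> A" "t' * (t * z) \<noteq> 0" "t' * (t * c) \<in> A"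
    using left_quotient by blast
  have "t' * t \<in> A" "t' * t * z \<noteq> 0" "\<forall>c'\<in>insert c C. t' * t * c' \<in> A"
    using t t' by (auto simp: mult_mem mult.assoc)
  then show ?case by blast
qed

lemma elementary_operator_eq_zero_A_coefficients:
  assumes "fst ` set L \<subseteq> A" "\<forall>y\<in>A. elementary_operator L y = 0"
  shows "elementary_operator L p = 0"
  using assms
proof (induction L rule: length_induct)
  case (1 L)
  define z where "z = elementary_operator L p"
  have coeff_w_z_zero: "a * w * z = 0"
    if ab: "(a, b) \<in> set L" and w: "w \<in> A" "w * (a * p) \<in> A" for a b w
  proof -
    define M where "M = map (\<lambda>(c, d). (a * w * c - c * w * a, d)) (remove1 (a, b) L)"
    have M_eq: "elementary_operator M y =
        a * w * elementary_operator L y - elementary_operator L (w * a * y)" for y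
      unfolding M_def using ab by (rule elementary_operator_commutator_remove1)
    have a: "a \<in> A" using ab 1 by force
    have "length M < length L"
      using ab by (auto simp: M_def length_remove1 dest: length_pos_if_in_set)
    moreover have "fst ` set M \<subseteq> A"
      using 1 a w set_remove1_subset[of "(a, b)" L] by (fastforce simp: M_def diff_mem mult_mem)
    moreover have "\<forall>y\<in>A. elementary_operator M y = 0"
      using 1 a w by (simp add: M_eq mult_mem)
    ultimately have "elementary_operator M p = 0" using 1 by blast
    moreover have "elementary_operator L (w * a * p) = 0"
      using 1 w by (simp add: mult.assoc)
    ultimately show ?thesis by (simp add: M_eq z_def)
  qed
  have z_r_coeff_zero: "z * r * a = 0" if "(a, b) \<in> set L" "r \<in> A" for a b r
    using coeff_w_z_zero[OF that(1)] that(2) by (rule annihilation_swap)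
  have "z * r * z = 0" if r: "r \<in> A" for r
  proof -
    have "z * r * z = elementary_operator (map (\<lambda>(c, d). (z * r * c, d)) L) p"
      using elementary_operator_mult_left[of "z * r" L p] by (simp add: z_def)
    also have "\<dots> = 0"
      using z_r_coeff_zero r by (force intro: elementary_operator_eq_zeroI)
    finally show ?thesis .
  qed
  then show ?case
    unfolding z_def[symmetric] by (rule quotient_sandwich_vanishes_imp_zero)
qed

lemma elementary_operator_eq_zero:
  assumes "\<forall>y\<in>A. elementary_operator L y = 0"
  shows "elementary_operator L x = 0"
proof (rule ccontr)
  assume "elementary_operator L x \<noteq> 0"
  then obtain t where t: "t \<in> A" "t * elementary_operator L x \<noteq> 0"
    "\<forall>c\<in>fst ` set L. t * c \<in> A"
    using common_denominator[of "fst ` set L"] by blast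
  let ?tL = "map (\<lambda>(c, d). (t * c, d)) L"
  have "fst ` set ?tL \<subseteq> A"
    using t by auto
  moreover have "\<forall>y\<in>A. elementary_operator ?tL y = 0"
    using assms by (simp add: elementary_operator_mult_left[symmetric])
  ultimately have "elementary_operator ?tL x = 0"
    by (rule elementary_operator_eq_zero_A_coefficients)
  with t show False
    by (simp add: elementary_operator_mult_left)
qed

end

lemma max_left_quotient_unit:
  fixes s :: "'k::comm_ring_1 \<Rightarrow> 'q::ring \<Rightarrow> 'q"
  assumes "is_max_left_quotient s A"
  obtains e :: 'q where "\<And>x. e * x = x" "\<And>x. x * e = x"
proof -
  have subalgebra: "subalgebra s A"
    and left_quotient: "\<And>p q. p \<noteq> 0 \<Longrightarrow> \<exists>a\<in>A. a * p \<noteq> 0 \<and> a * q \<in> A"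
    using assms unfolding is_max_left_quotient_def by blast+
  have "dense_left_ideal s A A"
    using subalgebra left_quotient unfolding dense_left_ideal_def left_ideal_def subalgebra_def by blast
  moreover have "left_module_hom s A A id"
    unfolding left_module_hom_def by auto
  ultimately have "\<exists>e. \<forall>x\<in>A. id x = x * e"
    using assms unfolding is_max_left_quotient_def by blast
  then obtain e where e: "\<And>x. x \<in> A \<Longrightarrow> x * e = x"
    by (metis id_apply)
  have "p * e = p" for p
  proof (rule ccontr)
    assume "p * e \<noteq> p"
    then obtain a where a: "a * (p * e - p) \<noteq> 0" "a * p \<in> A"
      using left_quotient[of "p * e - p" p] by auto
    from a(1) have "a * p * e \<noteq> a * p"
      by (simp add: right_diff_distrib mult.assoc)
    with e a(2) show False by simp
  qed
  moreover have "e * p = p" for p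
  proof (rule ccontr)
    assume "e * p \<noteq> p"
    then obtain a where a: "a \<in> A" "a * (e * p - p) \<noteq> 0"
      using left_quotient[of "e * p - p" 0] by auto
    from a(2) have "a * e * p \<noteq> a * p"
      by (simp add: right_diff_distrib mult.assoc)
    with e a(1) show False by simp
  qed
  ultimately show ?thesis using that by blast
qed

theorem mainTheorem13:
  fixes s :: "'k::comm_ring_1 \<Rightarrow> 'q::ring \<Rightarrow> 'q"
    and A Q :: "'q set"
  assumes "phi_algebra s"
    and "is_max_left_quotient s A"
    and "semiprime s A"
    and "subalgebra s Q"
    and "A \<subseteq> Q"
  shows "dense_extension s A Q"
proof -
  interpret semiprime_left_quotient s A
    using assms(1-3) by unfold_locales (auto simp: is_max_left_quotient_def)
  obtain e :: 'q where unit: "\<And>x. e * x = x" "\<And>x. x * e = x"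
    using max_left_quotient_unit[OF assms(2)] by blast
  have "\<mu> x = 0" if \<mu>: "\<mu> \<in> mult_algebra s Q" and vanishes: "\<forall>a\<in>A. \<mu> a = 0" for \<mu> x
  proof -
    obtain L where "\<mu> = elementary_operator L"
      using mult_algebra_elementary_operator[OF unit \<mu>] by blast
    with vanishes show ?thesis
      by (simp add: elementary_operator_eq_zero)
  qed
  with assms(5) show ?thesis
    unfolding dense_extension_def by blast
qed

end
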